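(* Let $X$ be a random variable with values in $\{x_1,\ldots,x_N\}$. Let $A\geq16$ be such that $\mathbb{P}[X=x_i]\geq\frac1A$ for all $i\in[N]$. Let $J\subseteq\{x_1,\ldots,x_N\}$ and let $\mathcal{E}$ be the event that $X\in J$. Suppose $\mathbb{P}[\mathcal{E}]\geq1-a$ for some $0\leq a\leq\frac12$. Then $H(X)-H(X\mid\mathcal{E})\leq 2a\log A$.
   Context: $\log=\log_2$. For a discrete random variable $X$ with outcomes $x_1,\dots,x_N$ and $p_i=\mathbb{P}[X=x_i]$, $H(X)=-\sum_i p_i\log p_i$ (with $0\log0:=0$). For an event $\mathcal{E}$ of positive probability and $p_i'=\mathbb{P}[X=x_i\mid\mathcal{E}]$, $H(X\mid\mathcal{E})=-\sum_i p_i'\log p_i'$. *)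

theory Defs
  imports "HOL-Probability.Probability"
begin

text \<open>Shannon entropy (base 2) of a finitely supported distribution;
  outcomes of probability zero are omitted (convention 0 log 0 = 0).\<close>
definition entropy :: "'a pmf \<Rightarrow> real" where
  "entropy p = - (\<Sum>x\<in>set_pmf p. pmf p x * log 2 (pmf p x))"

end

theory Submission
  imports Defs
begin

text \<open>Write \<open>P = \<P>[\<E>]\<close> and split \<open>H(X) = T + U\<close> into the contributions \<open>T\<close> of the outcomes
  in \<open>J\<close> and \<open>U\<close> of those outside. Conditioning rescales the probabilities in \<open>J\<close> by \<open>1/P\<close>,
  which gives \<open>H(X | \<E>) = T/P + log P \<ge> T + log P\<close>. Since every outcome has probability
  at least \<open>1/A\<close>, \<open>U \<le> (1 - P) log A\<close>, and \<open>-log P \<le> 4(1 - P) \<le> (1 - P) log A\<close> because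
  \<open>P \<ge> 1/2\<close> and \<open>A \<ge> 16\<close>. Hence \<open>H(X) - H(X | \<E>) \<le> 2(1 - P) log A \<le> 2a log A\<close>.\<close>

definition entropy_contrib :: "'a pmf \<Rightarrow> 'a set \<Rightarrow> real" where
  "entropy_contrib p B = - (\<Sum>x\<in>set_pmf p \<inter> B. pmf p x * log 2 (pmf p x))"

lemma measure_pmf_eq_sum_set_pmf_Int:
  assumes "finite (set_pmf p)"
  shows "measure_pmf.prob p B = (\<Sum>x\<in>set_pmf p \<inter> B. pmf p x)"
  using measure_Int_set_pmf[of p B] assms
  by (simp add: measure_measure_pmf_finite Int_commute)

lemma entropy_eq_entropy_contrib_add_Compl:
  assumes "finite (set_pmf p)"
  shows "entropy p = entropy_contrib p B + entropy_contrib p (- B)"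
proof -
  have "set_pmf p = (set_pmf p \<inter> B) \<union> (set_pmf p \<inter> - B)" by blast
  then show ?thesis
    unfolding entropy_def entropy_contrib_def using assms
    by (subst (1 2) \<open>set_pmf p = _\<close>) (subst sum.union_disjoint; auto)
qed

lemma entropy_contrib_nonneg: "entropy_contrib p B \<ge> 0"
proof -
  have "(\<Sum>x\<in>set_pmf p \<inter> B. pmf p x * log 2 (pmf p x)) \<le> 0"
  proof (rule sum_nonpos)
    fix x assume "x \<in> set_pmf p \<inter> B"
    then show "pmf p x * log 2 (pmf p x) \<le> 0"
      using pmf_le_1[of p x] by (intro mult_nonneg_nonpos) (auto simp: pmf_positive)
  qed
  then show ?thesis
    unfolding entropy_contrib_def by simp
qed

lemma entropy_contrib_le_prob_mult_log:
  assumes "finite (set_pmf p)" and "A > 0"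
    and min_prob: "\<And>x. x \<in> set_pmf p \<inter> B \<Longrightarrow> pmf p x \<ge> 1 / A"
  shows "entropy_contrib p B \<le> measure_pmf.prob p B * log 2 A"
proof -
  have "- (pmf p x * log 2 (pmf p x)) \<le> pmf p x * log 2 A" if x: "x \<in> set_pmf p \<inter> B" for x
  proof -
    have "log 2 (1 / A) \<le> log 2 (pmf p x)"
      using min_prob[OF x] x \<open>A > 0\<close> by (subst log_le_cancel_iff) (auto simp: pmf_positive)
    then have "- log 2 (pmf p x) \<le> log 2 A"
      using \<open>A > 0\<close> by (simp add: log_divide)
    then have "pmf p x * - log 2 (pmf p x) \<le> pmf p x * log 2 A"
      by (rule mult_left_mono) simp
    then show ?thesis by simp
  qed
  then have "entropy_contrib p B \<le> (\<Sum>x\<in>set_pmf p \<inter> B. pmf p x * log 2 A)"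
    unfolding entropy_contrib_def sum_negf[symmetric] by (rule sum_mono)
  also have "\<dots> = measure_pmf.prob p B * log 2 A"
    by (simp add: measure_pmf_eq_sum_set_pmf_Int[OF assms(1)] sum_distrib_right)
  finally show ?thesis .
qed

lemma entropy_cond_pmf:
  assumes "finite (set_pmf p)" and "set_pmf p \<inter> B \<noteq> {}"
  defines "P \<equiv> measure_pmf.prob p B"
  shows "entropy (cond_pmf p B) = entropy_contrib p B / P + log 2 P"
proof -
  have "P > 0"
    using assms(2) unfolding P_def by (auto intro: measure_pmf_posI)
  have "pmf (cond_pmf p B) x * log 2 (pmf (cond_pmf p B) x)
      = pmf p x * log 2 (pmf p x) / P - pmf p x * log 2 P / P"
    if "x \<in> set_pmf p \<inter> B" for x
  proof -
    have "pmf p x > 0" using that by (simp add: pmf_positive)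
    then show ?thesis
      using that \<open>P > 0\<close>
      by (simp add: pmf_cond[OF assms(2)] P_def log_divide diff_divide_distrib right_diff_distrib)
  qed
  then have "entropy (cond_pmf p B)
      = - (\<Sum>x\<in>set_pmf p \<inter> B. pmf p x * log 2 (pmf p x) / P - pmf p x * log 2 P / P)"
    unfolding entropy_def set_cond_pmf[OF assms(2)]
    by (intro arg_cong[where f = uminus] sum.cong) auto
  also have "\<dots> = entropy_contrib p B / P + (\<Sum>x\<in>set_pmf p \<inter> B. pmf p x) * log 2 P / P"
    unfolding entropy_contrib_def sum_subtractf sum_divide_distrib[symmetric]
      sum_distrib_right[symmetric] by simp
  also have "\<dots> = entropy_contrib p B / P + log 2 P"
    using \<open>P > 0\<close> by (simp add: P_def measure_pmf_eq_sum_set_pmf_Int[OF assms(1)])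
  finally show ?thesis .
qed

lemma entropy_minus_entropy_cond_pmf_le:
  assumes "finite (set_pmf p)" and "set_pmf p \<inter> B \<noteq> {}"
  shows "entropy p - entropy (cond_pmf p B)
    \<le> entropy_contrib p (- B) - log 2 (measure_pmf.prob p B)"
proof -
  define P where "P = measure_pmf.prob p B"
  have "0 < P" "P \<le> 1"
    using assms(2) unfolding P_def by (auto intro: measure_pmf_posI)
  then have "entropy_contrib p B \<le> entropy_contrib p B / P"
    using entropy_contrib_nonneg[of p B] mult_left_mono[of P 1 "entropy_contrib p B"]
    by (simp add: le_divide_eq)
  then show ?thesis
    using entropy_eq_entropy_contrib_add_Compl[OF assms(1), of B] entropy_cond_pmf[OF assms]
    by (simp add: P_def)
qed

lemma minus_log2_le_4_mult_one_minus:
  fixes P :: real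
  assumes "1 / 2 \<le> P" and "P \<le> 1"
  shows "- log 2 P \<le> 4 * (1 - P)"
proof -
  have ln2: "ln 2 \<ge> (1 / 2 :: real)"
    using ln_le_minus_one[of "1 / 2 :: real"] by (simp add: ln_div)
  have "- ln P = ln (1 / P)"
    using assms by (simp add: ln_div)
  also have "\<dots> \<le> 1 / P - 1"
    using assms by (intro ln_le_minus_one) simp
  also have "\<dots> \<le> 2 * (1 - P)"
    using assms mult_left_mono[of 1 "2 * P" "1 - P"] by (simp add: field_simps)
  finally have "- ln P \<le> 2 * (1 - P)" .
  then have "- log 2 P \<le> 2 * (1 - P) / ln 2"
    using divide_right_mono[of "- ln P" _ "ln 2"] ln2 by (simp add: log_def)
  also have "\<dots> \<le> 2 * (1 - P) / (1 / 2)"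
    using ln2 assms by (intro divide_left_mono) auto
  finally show ?thesis by simp
qed

theorem lemma3p1:
  fixes X :: "'a pmf" and S J :: "'a set" and A a :: real
  assumes "finite S"
    and "set_pmf X \<subseteq> S"
    and "A \<ge> 16"
    and "\<forall>x\<in>S. pmf X x \<ge> 1 / A"
    and "J \<subseteq> S"
    and "0 \<le> a" and "a \<le> 1 / 2"
    and "measure_pmf.prob X J \<ge> 1 - a"
  shows "entropy X - entropy (cond_pmf X J) \<le> 2 * a * log 2 A"
proof -
  define P where "P = measure_pmf.prob X J"
  have fin: "finite (set_pmf X)" using assms(1,2) finite_subset by blast
  have P: "1 / 2 \<le> P" "P \<le> 1" "1 - P \<le> a" using assms(7,8) by (auto simp: P_def)
  then have "set_pmf X \<inter> J \<noteq> {}" using measure_pmf_zero_iff[of X J] by (auto simp: P_def)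
  have "log 2 A \<ge> 4"
  proof -
    have "4 = log 2 (2 ^ 4 :: real)" using log_pow_cancel[of 2 4] by simp
    also have "\<dots> \<le> log 2 A" using assms(3) by simp
    finally show ?thesis .
  qed
  have "entropy_contrib X (- J) \<le> (1 - P) * log 2 A"
    using entropy_contrib_le_prob_mult_log[OF fin, of A "- J"] assms(2-4)
    by (auto simp: P_def measure_pmf.prob_compl[symmetric] Compl_eq_Diff_UNIV)
  moreover have "- log 2 P \<le> (1 - P) * log 2 A"
    using minus_log2_le_4_mult_one_minus[OF P(1,2)] mult_left_mono[OF \<open>log 2 A \<ge> 4\<close>, of "1 - P"] P(2)
    by linarith
  moreover have "(1 - P) * log 2 A \<le> a * log 2 A"
    using P(3) \<open>log 2 A \<ge> 4\<close> by (simp add: mult_right_mono)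
  ultimately show ?thesis
    using entropy_minus_entropy_cond_pmf_le[OF fin \<open>set_pmf X \<inter> J \<noteq> {}\<close>] by (simp add: P_def)
qed

end
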